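(* With $\mathbf{Y}_\mathrm{l},\mathbf{Y}_\mathrm{e}$ as in the context and $g(\mathbf{v})=\frac{\mathbf{v}^H\mathbf{Y}_\mathrm{l}\mathbf{v}}{\mathbf{v}^H\mathbf{Y}_\mathrm{e}\mathbf{v}}$, let $\mathbf{v}^{(t)}\in\mathbb{C}^M$ satisfy $|v^{(t)}_i|=1$ for all $i$, let $$\mathbf{w}^{(t)}=\frac{\mathbf{Y}_\mathrm{l}\mathbf{v}^{(t)}}{(\mathbf{v}^{(t)})^H\mathbf{Y}_\mathrm{e}\mathbf{v}^{(t)}}-\frac{(\mathbf{v}^{(t)})^H\mathbf{Y}_\mathrm{l}\mathbf{v}^{(t)}}{[(\mathbf{v}^{(t)})^H\mathbf{Y}_\mathrm{e}\mathbf{v}^{(t)}]^2}\big[\mathbf{Y}_\mathrm{e}-\lambda_{\max}(\mathbf{Y}_\mathrm{e})\mathbf{I}_M\big]\mathbf{v}^{(t)},$$ and let $\mathbf{v}^{(t+1)}$ be any vector with $|v^{(t+1)}_i|=1$ for all $i$ and $v^{(t+1)}_i=w^{(t)}_i/|w^{(t)}_i|$ whenever $w^{(t)}_i\ne0$. Then $g(\mathbf{v}^{(t+1)})\ge g(\mathbf{v}^{(t)})$.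
   Context: Let $M,N_t\ge1$, $P\ge0$, $\sigma_\mathrm{l}^2,\sigma_\mathrm{e}^2>0$, $\mathbf{R}_\mathrm{l},\mathbf{R}_\mathrm{e}\in\mathbb{C}^{M\times N_t}$, $\mathbf{f}\in\mathbb{C}^{N_t}$, and $\mathbf{Y}_i=\frac1M\mathbf{I}_M+\frac{P}{\sigma_i^2}\mathbf{R}_i\mathbf{f}\mathbf{f}^H\mathbf{R}_i^H$ for $i\in\{\mathrm{l},\mathrm{e}\}$. $\lambda_{\max}$ denotes the largest eigenvalue of a Hermitian matrix. *)

theory Defs
  imports "HOL-Analysis.Analysis"
begin

definition ctrans :: "complex^'n^'m \<Rightarrow> complex^'m^'n" where
  "ctrans A = (\<chi> i j. cnj (A $ j $ i))"

definition hform :: "complex^'m^'m \<Rightarrow> complex^'m \<Rightarrow> complex" where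
  "hform A v = (\<Sum>i\<in>UNIV. cnj (v $ i) * ((A *v v) $ i))"

definition outer :: "complex^'m \<Rightarrow> complex^'n \<Rightarrow> complex^'n^'m" where
  "outer x y = (\<chi> i j. x $ i * cnj (y $ j))"

text \<open>Largest eigenvalue of a Hermitian matrix (its eigenvalues are real).\<close>
definition lambda_max :: "complex^'m^'m \<Rightarrow> real" where
  "lambda_max A = Max {x::real. \<exists>v. v \<noteq> 0 \<and> A *v v = complex_of_real x *s v}"

definition Ymat :: "real \<Rightarrow> real \<Rightarrow> complex^'n^'m \<Rightarrow> complex^'n \<Rightarrow> complex^'m^'m" where
  "Ymat P s2 R f = (\<chi> i j. (mat (1 / of_nat CARD('m)) :: complex^'m^'m) $ i $ j
      + complex_of_real (P / s2) * (R ** outer f f ** ctrans R) $ i $ j)"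

text \<open>The objective g(v) = (v^H Yl v) / (v^H Ye v) (a real number since both forms are real).\<close>
definition gobj :: "complex^'m^'m \<Rightarrow> complex^'m^'m \<Rightarrow> complex^'m \<Rightarrow> real" where
  "gobj Yl Ye v = Re (hform Yl v / hform Ye v)"

end

theory Submission
  imports Defs
begin

text \<open>
  A minorize-maximize argument. With \<open>d = v' - v\<close>, positive semidefiniteness of \<open>Y\<^sub>l\<close> gives
  \<open>v'\<^sup>H Y\<^sub>l v' \<ge> v\<^sup>H Y\<^sub>l v + 2 Re ((Y\<^sub>l v)\<^sup>H d)\<close>, while \<open>Y\<^sub>e \<le> \<lambda>\<^sub>m\<^sub>a\<^sub>x I\<close> together with
  \<open>\<parallel>v'\<parallel> = \<parallel>v\<parallel> = \<surd>M\<close> gives \<open>v'\<^sup>H Y\<^sub>e v' \<le> v\<^sup>H Y\<^sub>e v + 2 Re (((Y\<^sub>e - \<lambda>\<^sub>m\<^sub>a\<^sub>x I) v)\<^sup>H d)\<close>.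
  Hence the numerator of \<open>g(v')\<close> minus \<open>g(v)\<close> times its denominator is at least
  \<open>2 (v\<^sup>H Y\<^sub>e v) Re (w\<^sup>H d)\<close>, which is nonnegative because \<open>v'\<close> is the unimodular vector best
  aligned with \<open>w\<close>. Both matrices are a scaled identity plus a rank-one term, so all their
  quadratic forms and the largest eigenvalue are explicit.
\<close>

definition cinner :: "complex^'m \<Rightarrow> complex^'m \<Rightarrow> complex" where
  "cinner x y = (\<Sum>i\<in>UNIV. cnj (x $ i) * y $ i)"

definition hermitian :: "complex^'m^'m \<Rightarrow> bool" where
  "hermitian A \<longleftrightarrow> ctrans A = A"

lemma cinner_add_right: "cinner x (y + z) = cinner x y + cinner x z"
  by (simp add: cinner_def sum.distrib distrib_left)

lemma cinner_add_left: "cinner (x + y) z = cinner x z + cinner y z"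
  by (simp add: cinner_def sum.distrib distrib_right)

lemma cinner_diff_right: "cinner x (y - z) = cinner x y - cinner x z"
  by (simp add: cinner_def sum_subtractf right_diff_distrib)

lemma cinner_diff_left: "cinner (x - y) z = cinner x z - cinner y z"
  by (simp add: cinner_def sum_subtractf left_diff_distrib)

lemma cinner_scale_right: "cinner x (c *s y) = c * cinner x y"
  by (simp add: cinner_def sum_distrib_left mult_ac)

lemma cinner_scale_left: "cinner (c *s x) y = cnj c * cinner x y"
  by (simp add: cinner_def sum_distrib_left mult_ac)

lemma cnj_cinner: "cnj (cinner x y) = cinner y x"
  by (simp add: cinner_def mult.commute)

lemma norm_vec_power2: "(norm x)\<^sup>2 = (\<Sum>i\<in>UNIV. (norm (x $ i))\<^sup>2)"
  by (simp add: norm_vec_def L2_set_def sum_nonneg)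

lemma cinner_self: "cinner x x = of_real ((norm x)\<^sup>2)"
proof -
  have "cinner x x = (\<Sum>i\<in>UNIV. of_real ((norm (x $ i))\<^sup>2))"
    unfolding cinner_def
    by (rule sum.cong) (simp_all add: complex_norm_square mult.commute del: of_real_power)
  then show ?thesis by (simp add: norm_vec_power2)
qed

lemma norm_cinner_le: "cmod (cinner x y) \<le> norm x * norm y"
proof -
  have "cmod (cinner x y) \<le> (\<Sum>i\<in>UNIV. \<bar>norm (x $ i)\<bar> * \<bar>norm (y $ i)\<bar>)"
    unfolding cinner_def by (rule order_trans[OF norm_sum]) (simp add: norm_mult)
  also have "\<dots> \<le> norm x * norm y"
    unfolding norm_vec_def by (rule L2_set_mult_ineq)
  finally show ?thesis .
qed

lemma norm_add_power2:
  "(norm (x + d))\<^sup>2 = (norm x)\<^sup>2 + 2 * Re (cinner x d) + (norm d)\<^sup>2"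
proof -
  have "of_real ((norm (x + d))\<^sup>2) = cinner (x + d) (x + d)"
    by (rule cinner_self[symmetric])
  also have "\<dots> = cinner x x + (cinner x d + cnj (cinner x d)) + cinner d d"
    by (simp add: cinner_add_left cinner_add_right cnj_cinner)
  also have "\<dots> = of_real ((norm x)\<^sup>2 + 2 * Re (cinner x d) + (norm d)\<^sup>2)"
    by (simp only: cinner_self complex_add_cnj of_real_add)
  finally show ?thesis by (simp only: of_real_eq_iff)
qed

lemma hform_eq_cinner: "hform A x = cinner x (A *v x)"
  by (simp add: hform_def cinner_def)

lemma cinner_matrix_vector_mult: "cinner x (A *v y) = cinner (ctrans A *v x) y"
proof -
  have "cinner x (A *v y) = (\<Sum>i\<in>UNIV. \<Sum>j\<in>UNIV. cnj (x $ i) * A $ i $ j * y $ j)"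
    by (simp add: cinner_def matrix_vector_mult_def sum_distrib_left mult.assoc)
  also have "\<dots> = (\<Sum>j\<in>UNIV. \<Sum>i\<in>UNIV. cnj (x $ i) * A $ i $ j * y $ j)"
    by (rule sum.swap)
  also have "\<dots> = (\<Sum>j\<in>UNIV. cnj (\<Sum>i\<in>UNIV. cnj (A $ i $ j) * x $ i) * y $ j)"
    by (rule sum.cong[OF refl]) (simp add: sum_distrib_left mult_ac)
  also have "\<dots> = cinner (ctrans A *v x) y"
    by (simp add: cinner_def matrix_vector_mult_def ctrans_def)
  finally show ?thesis .
qed

lemma hermitian_cinner: "hermitian A \<Longrightarrow> cinner x (A *v y) = cinner (A *v x) y"
  by (simp add: hermitian_def cinner_matrix_vector_mult)

lemma hform_hermitian_real:
  assumes "hermitian A"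
  shows "hform A x = of_real (Re (hform A x))"
proof -
  have "cnj (hform A x) = hform A x"
    by (simp add: hform_eq_cinner cnj_cinner hermitian_cinner[OF assms])
  from arg_cong[of _ _ Im, OF this] have "Im (hform A x) = 0" by simp
  then show ?thesis by (simp add: complex_eq_iff)
qed

lemma Re_hform_add:
  assumes "hermitian A"
  shows "Re (hform A (x + d)) = Re (hform A x) + 2 * Re (cinner (A *v x) d) + Re (hform A d)"
proof -
  have "hform A (x + d) = hform A x + (cinner (A *v x) d + cnj (cinner (A *v x) d)) + hform A d"
    using hermitian_cinner[OF assms, of x d]
    by (simp add: hform_eq_cinner matrix_vector_right_distrib cinner_add_left cinner_add_right cnj_cinner)
  then show ?thesis by (simp add: complex_add_cnj)
qed

lemma mat_mult_vec: "(mat c :: 'a::semiring_1^'n^'n) *v x = c *s x"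
proof -
  have "(\<Sum>j\<in>UNIV. (mat c :: 'a^'n^'n) $ i $ j * x $ j) = (\<Sum>j\<in>UNIV. if i = j then c * x $ j else 0)" for i
    by (rule sum.cong) (auto simp: mat_def)
  then show ?thesis by (simp add: vec_eq_iff matrix_vector_mult_def)
qed

lemma gobj_hermitian:
  assumes "hermitian A" and "hermitian B"
  shows "gobj A B x = Re (hform A x) / Re (hform B x)"
proof -
  have "hform A x / hform B x = of_real (Re (hform A x)) / of_real (Re (hform B x))"
    by (rule arg_cong2[where f = "(/)"]) (rule hform_hermitian_real[OF assms(1)], rule hform_hermitian_real[OF assms(2)])
  then show ?thesis by (simp add: gobj_def flip: of_real_divide)
qed

lemma Re_hform_minorize:
  assumes "hermitian A" and "\<And>x. Re (hform A x) \<ge> 0"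
  shows "Re (hform A v) + 2 * Re (cinner (A *v v) (v' - v)) \<le> Re (hform A v')"
  using Re_hform_add[OF assms(1), of v "v' - v"] assms(2)[of "v' - v"] by simp

lemma Re_hform_majorize:
  assumes "hermitian B" and "\<And>x. Re (hform B x) \<le> lmax * (norm x)\<^sup>2" and "norm v' = norm v"
  shows "Re (hform B v') \<le> Re (hform B v) + 2 * Re (cinner ((B - mat (of_real lmax)) *v v) (v' - v))"
proof -
  define d where "d = v' - v"
  have v': "v' = v + d" by (simp add: d_def)
  have norm_d: "(norm d)\<^sup>2 = - 2 * Re (cinner v d)"
    using norm_add_power2[of v d] assms(3) by (simp add: v')
  have "cinner ((B - mat (of_real lmax)) *v v) d = cinner (B *v v) d - of_real lmax * cinner v d"
    by (simp add: matrix_vector_mult_diff_rdistrib mat_mult_vec cinner_diff_left cinner_scale_left)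
  then show ?thesis
    using Re_hform_add[OF assms(1), of v d] assms(2)[of d] norm_d by (simp add: v' flip: d_def)
qed

lemma Re_cinner_phase_aligned:
  assumes "\<And>i. cmod (v $ i) \<le> 1"
    and "\<And>i. w $ i \<noteq> 0 \<Longrightarrow> v' $ i = w $ i / of_real (cmod (w $ i))"
  shows "Re (cinner w v) \<le> Re (cinner w v')"
proof -
  have "Re (cnj (w $ i) * v $ i) \<le> Re (cnj (w $ i) * v' $ i)" for i
  proof (cases "w $ i = 0")
    case False
    have "Re (cnj (w $ i) * v $ i) \<le> cmod (cnj (w $ i) * v $ i)"
      by (rule complex_Re_le_cmod)
    also have "\<dots> \<le> cmod (w $ i)"
      using assms(1)[of i] by (simp add: norm_mult mult_left_le)
    also have "\<dots> = Re (cnj (w $ i) * v' $ i)"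
    proof -
      have "cnj (w $ i) * v' $ i = of_real ((cmod (w $ i))\<^sup>2) / of_real (cmod (w $ i))"
        using assms(2) False by (simp add: complex_norm_square mult.commute del: of_real_power)
      also have "\<dots> = of_real (cmod (w $ i))"
        using False by (simp add: power2_eq_square del: of_real_power)
      finally show ?thesis by simp
    qed
    finally show ?thesis .
  qed simp
  then show ?thesis unfolding cinner_def Re_sum by (rule sum_mono)
qed

lemma gobj_mm_ascent:
  fixes A B :: "complex^'m^'m" and v v' w :: "complex^'m" and lmax :: real
  assumes herm: "hermitian A" "hermitian B"
    and A_nonneg: "\<And>x. Re (hform A x) \<ge> 0"
    and B_pos: "\<And>x. x \<noteq> 0 \<Longrightarrow> Re (hform B x) > 0"
    and rayleigh: "\<And>x. Re (hform B x) \<le> lmax * (norm x)\<^sup>2"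
    and "v \<noteq> 0" and "norm v' = norm v"
    and w: "w = (1 / hform B v) *s (A *v v)
               - (hform A v / (hform B v)\<^sup>2) *s ((B - mat (of_real lmax)) *v v)"
    and aligned: "Re (cinner w v) \<le> Re (cinner w v')"
  shows "gobj A B v \<le> gobj A B v'"
proof -
  define a b a' b' where "a = Re (hform A v)" and "b = Re (hform B v)"
    and "a' = Re (hform A v')" and "b' = Re (hform B v')"
  define d where "d = v' - v"
  define dA dB where "dA = Re (cinner (A *v v) d)"
    and "dB = Re (cinner ((B - mat (of_real lmax)) *v v) d)"
  have b_pos: "b > 0" using B_pos \<open>v \<noteq> 0\<close> by (simp add: b_def)
  have "v' \<noteq> 0" using assms(6,7) by auto
  then have b'_pos: "b' > 0" using B_pos by (simp add: b'_def)
  have a_nonneg: "a \<ge> 0" by (simp add: a_def A_nonneg)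
  have minor: "a + 2 * dA \<le> a'"
    unfolding a_def a'_def dA_def d_def by (rule Re_hform_minorize[OF herm(1) A_nonneg])
  have major: "b' \<le> b + 2 * dB"
    unfolding b_def b'_def dB_def d_def by (rule Re_hform_majorize[OF herm(2) rayleigh assms(7)])
  have "a * dB \<le> b * dA"
  proof -
    have "hform A v = of_real a" unfolding a_def by (rule hform_hermitian_real[OF herm(1)])
    moreover have "hform B v = of_real b" unfolding b_def by (rule hform_hermitian_real[OF herm(2)])
    ultimately have "Re (cinner w d) = dA / b - a / b\<^sup>2 * dB"
      by (simp add: w dA_def dB_def cinner_diff_left cinner_scale_left)
    moreover have "Re (cinner w d) \<ge> 0"
      using aligned by (simp add: d_def cinner_diff_right)
    ultimately have "0 \<le> b\<^sup>2 * (dA / b - a / b\<^sup>2 * dB)" by simp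
    also have "\<dots> = b * dA - a * dB" using b_pos by (simp add: field_simps power2_eq_square)
    finally show ?thesis by simp
  qed
  have "a * b' \<le> a * (b + 2 * dB)" using major a_nonneg by (rule mult_left_mono)
  also have "\<dots> \<le> (a + 2 * dA) * b" using \<open>a * dB \<le> b * dA\<close> by (simp add: algebra_simps)
  also have "\<dots> \<le> a' * b" using minor b_pos by (simp add: mult_right_mono)
  finally have "a / b \<le> a' / b'" using b_pos b'_pos by (simp add: divide_simps mult.commute)
  then show ?thesis by (simp add: gobj_hermitian[OF herm] a_def b_def a'_def b'_def)
qed

definition rank_one_update :: "real \<Rightarrow> real \<Rightarrow> complex^'m \<Rightarrow> complex^'m^'m" where
  "rank_one_update \<alpha> c u = mat (of_real \<alpha>) + c *\<^sub>R outer u u"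

lemma matrix_mul_outer_ctrans: "A ** outer x y ** ctrans B = outer (A *v x) (B *v y)"
  by (simp add: vec_eq_iff matrix_matrix_mult_def outer_def ctrans_def matrix_vector_mult_def
      sum_distrib_left sum_distrib_right sum_product mult_ac)

lemma rank_one_update_entry:
  "rank_one_update \<alpha> c u $ i $ j = (if i = j then of_real \<alpha> else 0) + of_real c * (u $ i * cnj (u $ j))"
proof -
  have "rank_one_update \<alpha> c u $ i $ j = mat (of_real \<alpha>) $ i $ j + c *\<^sub>R (u $ i * cnj (u $ j))"
    by (simp add: rank_one_update_def outer_def)
  then show ?thesis by (simp add: mat_def scaleR_conv_of_real)
qed

lemma Ymat_eq_rank_one_update:
  fixes R :: "complex^'n^'m"
  shows "Ymat P s2 R f = rank_one_update (1 / real CARD('m)) (P / s2) (R *v f)"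
  unfolding Ymat_def matrix_mul_outer_ctrans
  by (simp add: rank_one_update_entry vec_eq_iff mat_def outer_def)

lemma rank_one_update_mult_vec:
  "rank_one_update \<alpha> c u *v x = of_real \<alpha> *s x + (of_real c * cinner u x) *s u"
proof -
  have "(rank_one_update \<alpha> c u *v x) $ i = (\<Sum>j\<in>UNIV. (if i = j then of_real \<alpha> * x $ j else 0)
      + of_real c * u $ i * (cnj (u $ j) * x $ j))" for i
    by (auto simp: rank_one_update_entry matrix_vector_mult_def algebra_simps intro!: sum.cong)
  then show ?thesis by (simp add: vec_eq_iff sum.distrib cinner_def sum_distrib_left mult_ac)
qed

lemma hermitian_rank_one_update: "hermitian (rank_one_update \<alpha> c u)"
  by (simp add: hermitian_def ctrans_def rank_one_update_entry vec_eq_iff mult.commute)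

lemma hform_rank_one_update:
  "hform (rank_one_update \<alpha> c u) x = of_real (\<alpha> * (norm x)\<^sup>2 + c * (cmod (cinner u x))\<^sup>2)"
proof -
  have "hform (rank_one_update \<alpha> c u) x = of_real \<alpha> * cinner x x + of_real c * (cinner u x * cnj (cinner u x))"
    by (simp add: hform_eq_cinner rank_one_update_mult_vec cinner_add_right cinner_scale_right cnj_cinner mult_ac)
  then show ?thesis by (simp add: cinner_self flip: complex_norm_square)
qed

lemma Re_hform_rank_one_update_nonneg:
  assumes "\<alpha> \<ge> 0" and "c \<ge> 0"
  shows "Re (hform (rank_one_update \<alpha> c u) x) \<ge> 0"
  by (simp add: hform_rank_one_update assms)

lemma Re_hform_rank_one_update_pos:
  assumes "\<alpha> > 0" and "c \<ge> 0" and "x \<noteq> 0"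
  shows "Re (hform (rank_one_update \<alpha> c u) x) > 0"
  by (simp add: hform_rank_one_update assms add_pos_nonneg)

lemma Re_hform_rank_one_update_le:
  assumes "c \<ge> 0"
  shows "Re (hform (rank_one_update \<alpha> c u) x) \<le> (\<alpha> + c * (norm u)\<^sup>2) * (norm x)\<^sup>2"
proof -
  have "(cmod (cinner u x))\<^sup>2 \<le> (norm u * norm x)\<^sup>2"
    by (rule power_mono[OF norm_cinner_le]) simp
  then have "c * (cmod (cinner u x))\<^sup>2 \<le> c * (norm u * norm x)\<^sup>2"
    using assms by (rule mult_left_mono)
  then show ?thesis by (simp add: hform_rank_one_update algebra_simps power_mult_distrib)
qed

lemma rank_one_update_eigenvalue_cases:
  assumes "x \<noteq> 0" and "rank_one_update \<alpha> c u *v x = of_real \<mu> *s x"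
  shows "\<mu> = \<alpha> \<or> \<mu> = \<alpha> + c * (norm u)\<^sup>2"
proof (cases "\<mu> = \<alpha>")
  case False
  have eigen: "of_real (\<mu> - \<alpha>) *s x = (of_real c * cinner u x) *s u"
    using assms(2) by (simp add: rank_one_update_mult_vec vector_sub_rdistrib algebra_simps)
  have "cinner u x \<noteq> 0"
  proof
    assume "cinner u x = 0"
    then have "of_real (\<mu> - \<alpha>) *s x = 0" using eigen by simp
    then show False using False assms(1) by (simp add: vec_eq_iff)
  qed
  have "of_real (\<mu> - \<alpha>) * cinner u x = cinner u (of_real (\<mu> - \<alpha>) *s x)"
    by (simp only: cinner_scale_right)
  also have "\<dots> = cinner u ((of_real c * cinner u x) *s u)"
    by (simp only: eigen)
  also have "\<dots> = of_real (c * (norm u)\<^sup>2) * cinner u x"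
    by (simp add: cinner_scale_right cinner_self)
  finally have "\<mu> - \<alpha> = c * (norm u)\<^sup>2"
    using \<open>cinner u x \<noteq> 0\<close> by (metis mult_cancel_right of_real_eq_iff)
  then show ?thesis by simp
qed simp

lemma rank_one_update_has_eigenvalue:
  "\<exists>y. y \<noteq> 0 \<and> rank_one_update \<alpha> c u *v y = of_real (\<alpha> + c * (norm u)\<^sup>2) *s y"
proof (cases "u = 0")
  case True
  have "(\<chi> i. 1) \<noteq> (0 :: complex^'m)" by (simp add: vec_eq_iff)
  with True show ?thesis by (auto simp: rank_one_update_mult_vec)
next
  case False
  then show ?thesis
    by (intro exI[of _ u]) (simp add: rank_one_update_mult_vec cinner_self algebra_simps)
qed

lemma lambda_max_rank_one_update:
  assumes "c \<ge> 0"
  shows "lambda_max (rank_one_update \<alpha> c u) = \<alpha> + c * (norm u)\<^sup>2"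
proof -
  let ?S = "{x. \<exists>v. v \<noteq> 0 \<and> rank_one_update \<alpha> c u *v v = of_real x *s v}"
  have "?S \<subseteq> {\<alpha>, \<alpha> + c * (norm u)\<^sup>2}"
    using rank_one_update_eigenvalue_cases by blast
  then have "finite ?S" by (rule finite_subset) simp
  moreover have "\<alpha> + c * (norm u)\<^sup>2 \<in> ?S"
    using rank_one_update_has_eigenvalue by blast
  moreover have "x \<le> \<alpha> + c * (norm u)\<^sup>2" if "x \<in> ?S" for x
    using \<open>?S \<subseteq> _\<close> that assms by auto
  ultimately show ?thesis unfolding lambda_max_def by (intro Max_eqI)
qed

lemma norm_unimodular:
  fixes v :: "complex^'m"
  assumes "\<And>i. cmod (v $ i) = 1"
  shows "norm v = sqrt (real CARD('m))"
  by (simp add: norm_vec_def L2_set_def assms)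

theorem mainTheorem5:
  fixes Rl Re' :: "complex^'n^'m" and f :: "complex^'n"
    and P sl2 se2 :: real and v w v' :: "complex^'m"
  assumes "P \<ge> 0" and "sl2 > 0" and "se2 > 0"
    and "\<forall>i. cmod (v $ i) = 1"
    and "w = (1 / hform (Ymat P se2 Re' f) v) *s (Ymat P sl2 Rl f *v v)
             - (hform (Ymat P sl2 Rl f) v / (hform (Ymat P se2 Re' f) v)^2) *s
               ((Ymat P se2 Re' f - mat (complex_of_real (lambda_max (Ymat P se2 Re' f)))) *v v)"
    and "\<forall>i. cmod (v' $ i) = 1"
    and "\<forall>i. w $ i \<noteq> 0 \<longrightarrow> v' $ i = w $ i / complex_of_real (cmod (w $ i))"
  shows "gobj (Ymat P sl2 Rl f) (Ymat P se2 Re' f) v' \<ge> gobj (Ymat P sl2 Rl f) (Ymat P se2 Re' f) v"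
proof -
  define \<alpha> where "\<alpha> = 1 / real CARD('m)"
  have Yl: "Ymat P sl2 Rl f = rank_one_update \<alpha> (P / sl2) (Rl *v f)"
    and Ye: "Ymat P se2 Re' f = rank_one_update \<alpha> (P / se2) (Re' *v f)"
    by (simp_all add: Ymat_eq_rank_one_update \<alpha>_def)
  have "\<alpha> > 0" and "P / sl2 \<ge> 0" and "P / se2 \<ge> 0"
    using assms(1-3) by (simp_all add: \<alpha>_def)
  have "norm v = sqrt (real CARD('m))" and "norm v' = sqrt (real CARD('m))"
    using assms(4,6) by (simp_all add: norm_unimodular)
  then have "v \<noteq> 0" and "norm v' = norm v" by auto
  have herm: "hermitian (Ymat P sl2 Rl f)" "hermitian (Ymat P se2 Re' f)"
    unfolding Yl Ye by (rule hermitian_rank_one_update)+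
  have nonneg: "Re (hform (Ymat P sl2 Rl f) x) \<ge> 0" for x
    unfolding Yl using \<open>\<alpha> > 0\<close> \<open>P / sl2 \<ge> 0\<close> by (simp add: Re_hform_rank_one_update_nonneg)
  have pos: "Re (hform (Ymat P se2 Re' f) x) > 0" if "x \<noteq> 0" for x
    unfolding Ye using \<open>\<alpha> > 0\<close> \<open>P / se2 \<ge> 0\<close> that by (rule Re_hform_rank_one_update_pos)
  have rayleigh: "Re (hform (Ymat P se2 Re' f) x) \<le> lambda_max (Ymat P se2 Re' f) * (norm x)\<^sup>2" for x
    unfolding Ye lambda_max_rank_one_update[OF \<open>P / se2 \<ge> 0\<close>]
    using \<open>P / se2 \<ge> 0\<close> by (rule Re_hform_rank_one_update_le)
  have aligned: "Re (cinner w v) \<le> Re (cinner w v')"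
    using assms(4,7) by (intro Re_cinner_phase_aligned) auto
  show ?thesis
    by (rule gobj_mm_ascent[OF herm nonneg pos rayleigh \<open>v \<noteq> 0\<close> \<open>norm v' = norm v\<close> assms(5) aligned])
qed

end
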